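(* For every $n\in\mathbb N$, there exist infinitely many natural numbers that are antipalindromic in at least $n$ distinct integer bases $b\ge 2$.
   Context: For an integer $b\ge 2$, every natural number $x$ has a unique base-$b$ expansion $x=a_\ell b^\ell+\dots+a_1b+a_0$ with $a_0,\dots,a_\ell\in\{0,1,\dots,b-1\}$ and $a_\ell\neq 0$. The number $x$ is antipalindromic in base $b$ if $a_j=b-1-a_{\ell-j}$ for all $j\in\{0,1,\dots,\ell\}$. *)

theory Defs
  imports Main
begin

fun digits :: "nat \<Rightarrow> nat \<Rightarrow> nat list" where
  "digits b x = (if b < 2 \<or> x = 0 then [] else x mod b # digits b (x div b))"

definition antipalindromic :: "nat \<Rightarrow> nat \<Rightarrow> bool" where
  "antipalindromic b x \<longleftrightarrow> 2 \<le> b \<and> 0 < x \<and>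
     (let ds = digits b x; l = length ds - 1 in
        \<forall>j\<le>l. ds ! j = b - 1 - ds ! (l - j))"

end

theory Submission
  imports Defs
begin

text \<open>Every two-digit antipalindrome in base b has the form c (b - 1) with 2 \<le> c \<le> b:
  its digits are b - c and c - 1. If i divides N and 2 i \<le> N, then N^2 = (N div i) (N i),
  so N^2 is a two-digit antipalindrome in base N i + 1. Taking N a large multiple of n!,
  the square N^2 is antipalindromic in the n bases N i + 1 for i = 1, ..., n.\<close>

lemma digits_two_digits:
  assumes "lo < b" "0 < hi" "hi < b"
  shows "digits b (lo + hi * b) = [lo, hi]"
proof -
  have "digits b hi = [hi]"
    using assms by (subst digits.simps) simp
  then show ?thesis
    using assms by (subst digits.simps) simp
qed

lemma antipalindromic_mult_pred:
  assumes "2 \<le> c" "c \<le> b"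
  shows "antipalindromic b (c * (b - 1))"
proof -
  have "c * (b - 1) = (b - c) + (c - 1) * b"
    using assms by (simp add: algebra_simps diff_mult_distrib2)
  also have "digits b \<dots> = [b - c, c - 1]"
    using assms by (intro digits_two_digits) auto
  finally have "digits b (c * (b - 1)) = [b - c, c - 1]" .
  with assms show ?thesis
    unfolding antipalindromic_def Let_def by (auto simp: le_Suc_eq)
qed

lemma antipalindromic_square:
  assumes "i dvd N" "0 < i" "2 * i \<le> N"
  shows "antipalindromic (N * i + 1) (N\<^sup>2)"
proof -
  have "N\<^sup>2 = (N div i) * (N * i + 1 - 1)"
    using assms(1) by (simp add: power2_eq_square)
  moreover have "2 \<le> N div i"
    using assms div_le_mono[OF assms(3), of i] by simp
  moreover have "N div i \<le> N * i + 1"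
  proof -
    have "N div i \<le> N"
      by (rule div_le_dividend)
    also have "\<dots> \<le> N * i"
      using assms(2) by simp
    finally show ?thesis
      by simp
  qed
  ultimately show ?thesis
    using antipalindromic_mult_pred[of "N div i" "N * i + 1"] by simp
qed

lemma square_antipalindromic_in_bases:
  assumes "\<And>i. i \<in> {1..n} \<Longrightarrow> i dvd N" "2 * n \<le> N" "0 < N"
  shows "\<exists>B. card B = n \<and> finite B \<and> (\<forall>b\<in>B. 2 \<le> b \<and> antipalindromic b (N\<^sup>2))"
proof (intro exI conjI)
  let ?B = "(\<lambda>i. N * i + 1) ` {1..n}"
  have "inj_on (\<lambda>i. N * i + 1) {1..n}"
    using \<open>0 < N\<close> by (auto simp: inj_on_def)
  then show "card ?B = n"
    by (simp add: card_image)
  show "finite ?B"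
    by simp
  show "\<forall>b\<in>?B. 2 \<le> b \<and> antipalindromic b (N\<^sup>2)"
  proof
    fix b assume "b \<in> ?B"
    then obtain i where i: "i \<in> {1..n}" "b = N * i + 1"
      by blast
    have "antipalindromic b (N\<^sup>2)"
      unfolding i(2) using assms i(1) by (intro antipalindromic_square) auto
    with i \<open>0 < N\<close> show "2 \<le> b \<and> antipalindromic b (N\<^sup>2)"
      by (simp add: Suc_le_eq)
  qed
qed

theorem mainTheorem14:
  fixes n :: nat
  shows "infinite {x :: nat. \<exists>B :: nat set. card B = n \<and> finite B \<and> (\<forall>b\<in>B. 2 \<le> b \<and> antipalindromic b x)}"
proof -
  let ?S = "{x :: nat. \<exists>B :: nat set. card B = n \<and> finite B \<and> (\<forall>b\<in>B. 2 \<le> b \<and> antipalindromic b x)}"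
  have "\<exists>x\<in>?S. k < x" for k
  proof
    define N where "N = 2 * (k + 1) * fact n"
    have "i dvd N" if "i \<in> {1..n}" for i
    proof -
      have "i dvd fact n"
        using that by (simp add: dvd_fact)
      then show ?thesis
        unfolding N_def by (rule dvd_mult)
    qed
    moreover have "2 * n \<le> N"
      using fact_ge_self[of n] unfolding N_def by (simp add: mult.assoc mult_le_mono2 trans_le_add2)
    moreover have "0 < N"
      unfolding N_def by simp
    ultimately show "N\<^sup>2 \<in> ?S"
      using square_antipalindromic_in_bases by blast
    have "k + 1 \<le> (k + 1) * fact n"
      using mult_le_mono2[OF fact_ge_1, of "k + 1" n] by simp
    then have "k < N"
      unfolding N_def by linarith
    also have "N \<le> N\<^sup>2"
      by (simp add: power2_eq_square)
    finally show "k < N\<^sup>2" .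
  qed
  then show ?thesis
    using finite_nat_set_iff_bounded_le by (meson not_le)
qed

end
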